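(* Consider a budget-additive NSW instance with $v_{ij}\le c_i$ for all $i,j$ whose associated market ${\mathcal M}$ is money clearing, let $({\mathbf x},{\mathbf p})$ be a thrifty and modest equilibrium of ${\mathcal M}$, and let $v',c'$ be the normalized values and caps (see context), with normalized valuations $v'_i(S_i)=\min(c'_i,\sum_{j\in S_i}v'_{ij})$. Let $B_c$ be the set of buyers capped in $({\mathbf x},{\mathbf p})$. Then for every integral allocation $S^*$ (in particular one maximizing the Nash social welfare w.r.t. $v'$), $$\Big(\prod_{i\in B}v'_i(S^*_i)\Big)^{1/n}\le\Big(\prod_{i\in B_c}c'_i\prod_{j\in G:\,p_j>1}p_j\Big)^{1/n}.$$
   Context: Budget-additive NSW instance: agents $B$ ($|B|=n$), indivisible items $G$ ($|G|=m\ge n$), values $v_{ij}\ge0$, caps $c_i>0$, valuation $v_i(S_i)=\min(c_i,\sum_{j\in S_i}v_{ij})$; NSW of an allocation is $(\prod_i v_i(S_i))^{1/n}$. Associated market ${\mathcal M}$: Fisher market with buyer $i$ per agent, divisible unit-supply good $j$ per item, budget $m_i=1$, value $u_{ij}=v_{ij}$, utility cap $c_i$, earning cap $d_j=1$. Fisher market with earning and utility limits: buyers $B$, divisible goods $G$ each with unit supply; buyer $i$ has values $u_{ij}\ge0$, budget $m_i\ge0$, utility cap $c_i>0$; good $j$ has earning cap $d_j>0$. For a bundle ${\mathbf x}_i$ with $x_{ij}\ge0$, $u_i({\mathbf x}_i)=\min(c_i,\sum_j u_{ij}x_{ij})$. Given prices ${\mathbf p}\ge0$, the MBB ratio is $\alpha_i=\max_j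 u_{ij}/p_j$ ($0/0=0$, $u/0=\infty$ for $u>0$); $j$ is an MBB good of $i$ if $u_{ij}/p_j=\alpha_i$. A demand bundle maximizes $u_i({\mathbf x}_i)$ subject to $\sum_j p_jx_{ij}\le m_i$; thrifty: $x_{ij}>0$ only for MBB goods; modest: $\sum_ju_{ij}x_{ij}\le c_i$. Modest supply: $e_j=\min(1,d_j/p_j)$ ($=1$ if $p_j=0$). A thrifty and modest equilibrium is $({\mathbf x},{\mathbf p})$ with ${\mathbf p}\ge0$, $x_j=\sum_ix_{ij}\le e_j$, each ${\mathbf x}_i$ a thrifty and modest demand bundle, and $p_j(e_j-x_j)=0$. Buyer $i$ is capped if $u_i({\mathbf x}_i)=c_i$. Money clearing: for all $\hat B\subseteq B$, $\sum_{i\in\hat B}m_i\le\sum_{j\in N(\hat B)}d_j$, $N(\hat B)=\{j:u_{ij}>0\text{ for some }i\in\hat B\}$. Normalization: $G_0=\{j:p_j=0\}$, $B_0=\{i:v_{ij}>0\text{ for some }j\in G_0\}$. For $i\notin B_0$ with MBB ratio $\alpha_i$ at ${\mathbf p}$, $v'_{ij}=v_{ij}/\alpha_i$ and $c'_i=c_i/\alpha_i$; for $i\in B_0$, $v'_{ij}=v_{ij}$ and $c'_i=c_i$. *)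

theory Defs
  imports "HOL-Analysis.Analysis"
begin

text \<open>Buyers of type 'a, goods of type 'b. Values u, budgets m, utility caps c,
  earning caps d, prices p. A bundle of buyer i is a function 'b => real (only its
  values on the goods set G matter).\<close>

definition bb_ratio :: "real \<Rightarrow> real \<Rightarrow> ereal" where
  "bb_ratio u q = (if q = 0 then (if u > 0 then \<infinity> else 0) else ereal (u / q))"

definition mbb_ratio :: "'b set \<Rightarrow> ('a \<Rightarrow> 'b \<Rightarrow> real) \<Rightarrow> ('b \<Rightarrow> real) \<Rightarrow> 'a \<Rightarrow> ereal" where
  "mbb_ratio G u p i = Max ((\<lambda>j. bb_ratio (u i j) (p j)) ` G)"

definition is_mbb :: "'b set \<Rightarrow> ('a \<Rightarrow> 'b \<Rightarrow> real) \<Rightarrow> ('b \<Rightarrow> real) \<Rightarrow> 'a \<Rightarrow> 'b \<Rightarrow> bool" where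
  "is_mbb G u p i j \<longleftrightarrow> j \<in> G \<and> bb_ratio (u i j) (p j) = mbb_ratio G u p i"

definition bundle_util :: "'b set \<Rightarrow> ('a \<Rightarrow> 'b \<Rightarrow> real) \<Rightarrow> ('a \<Rightarrow> real) \<Rightarrow> 'a \<Rightarrow> ('b \<Rightarrow> real) \<Rightarrow> real" where
  "bundle_util G u c i y = min (c i) (\<Sum>j\<in>G. u i j * y j)"

definition affordable :: "'b set \<Rightarrow> ('a \<Rightarrow> real) \<Rightarrow> ('b \<Rightarrow> real) \<Rightarrow> 'a \<Rightarrow> ('b \<Rightarrow> real) \<Rightarrow> bool" where
  "affordable G m p i y \<longleftrightarrow> (\<forall>j\<in>G. y j \<ge> 0) \<and> (\<Sum>j\<in>G. p j * y j) \<le> m i"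

definition demand_bundle ::
  "'b set \<Rightarrow> ('a \<Rightarrow> 'b \<Rightarrow> real) \<Rightarrow> ('a \<Rightarrow> real) \<Rightarrow> ('a \<Rightarrow> real) \<Rightarrow> ('b \<Rightarrow> real) \<Rightarrow> 'a \<Rightarrow> ('b \<Rightarrow> real) \<Rightarrow> bool" where
  "demand_bundle G u c m p i y \<longleftrightarrow> affordable G m p i y \<and>
     (\<forall>z. affordable G m p i z \<longrightarrow> bundle_util G u c i z \<le> bundle_util G u c i y)"

definition thrifty :: "'b set \<Rightarrow> ('a \<Rightarrow> 'b \<Rightarrow> real) \<Rightarrow> ('b \<Rightarrow> real) \<Rightarrow> 'a \<Rightarrow> ('b \<Rightarrow> real) \<Rightarrow> bool" where
  "thrifty G u p i y \<longleftrightarrow> (\<forall>j\<in>G. y j > 0 \<longrightarrow> is_mbb G u p i j)"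

definition modest :: "'b set \<Rightarrow> ('a \<Rightarrow> 'b \<Rightarrow> real) \<Rightarrow> ('a \<Rightarrow> real) \<Rightarrow> 'a \<Rightarrow> ('b \<Rightarrow> real) \<Rightarrow> bool" where
  "modest G u c i y \<longleftrightarrow> (\<Sum>j\<in>G. u i j * y j) \<le> c i"

definition modest_supply :: "('b \<Rightarrow> real) \<Rightarrow> ('b \<Rightarrow> real) \<Rightarrow> 'b \<Rightarrow> real" where
  "modest_supply d p j = (if p j = 0 then 1 else min 1 (d j / p j))"

definition tm_equilibrium ::
  "'a set \<Rightarrow> 'b set \<Rightarrow> ('a \<Rightarrow> 'b \<Rightarrow> real) \<Rightarrow> ('a \<Rightarrow> real) \<Rightarrow> ('a \<Rightarrow> real) \<Rightarrow> ('b \<Rightarrow> real)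
   \<Rightarrow> ('a \<Rightarrow> 'b \<Rightarrow> real) \<Rightarrow> ('b \<Rightarrow> real) \<Rightarrow> bool" where
  "tm_equilibrium B G u c m d x p \<longleftrightarrow>
     (\<forall>j\<in>G. p j \<ge> 0) \<and>
     (\<forall>j\<in>G. (\<Sum>i\<in>B. x i j) \<le> modest_supply d p j) \<and>
     (\<forall>i\<in>B. demand_bundle G u c m p i (x i) \<and> thrifty G u p i (x i) \<and> modest G u c i (x i)) \<and>
     (\<forall>j\<in>G. p j * (modest_supply d p j - (\<Sum>i\<in>B. x i j)) = 0)"

definition capped_buyers ::
  "'a set \<Rightarrow> 'b set \<Rightarrow> ('a \<Rightarrow> 'b \<Rightarrow> real) \<Rightarrow> ('a \<Rightarrow> real) \<Rightarrow> ('a \<Rightarrow> 'b \<Rightarrow> real) \<Rightarrow> 'a set" where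
  "capped_buyers B G u c x = {i\<in>B. bundle_util G u c i (x i) = c i}"

definition money_clearing ::
  "'a set \<Rightarrow> 'b set \<Rightarrow> ('a \<Rightarrow> 'b \<Rightarrow> real) \<Rightarrow> ('a \<Rightarrow> real) \<Rightarrow> ('b \<Rightarrow> real) \<Rightarrow> bool" where
  "money_clearing B G u m d \<longleftrightarrow>
     (\<forall>B'\<subseteq>B. (\<Sum>i\<in>B'. m i) \<le> (\<Sum>j\<in>{j\<in>G. \<exists>i\<in>B'. u i j > 0}. d j))"

definition zero_goods :: "'b set \<Rightarrow> ('b \<Rightarrow> real) \<Rightarrow> 'b set" where
  "zero_goods G p = {j\<in>G. p j = 0}"

definition zero_buyers :: "'a set \<Rightarrow> 'b set \<Rightarrow> ('a \<Rightarrow> 'b \<Rightarrow> real) \<Rightarrow> ('b \<Rightarrow> real) \<Rightarrow> 'a set" where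
  "zero_buyers B G v p = {i\<in>B. \<exists>j\<in>zero_goods G p. v i j > 0}"

text \<open>For buyers outside B_0 the MBB ratio is finite (no positive-value good has price 0).\<close>
definition norm_val ::
  "'a set \<Rightarrow> 'b set \<Rightarrow> ('a \<Rightarrow> 'b \<Rightarrow> real) \<Rightarrow> ('b \<Rightarrow> real) \<Rightarrow> 'a \<Rightarrow> 'b \<Rightarrow> real" where
  "norm_val B G v p i j = (if i \<in> zero_buyers B G v p then v i j
                           else v i j / real_of_ereal (mbb_ratio G v p i))"

definition norm_cap ::
  "'a set \<Rightarrow> 'b set \<Rightarrow> ('a \<Rightarrow> 'b \<Rightarrow> real) \<Rightarrow> ('a \<Rightarrow> real) \<Rightarrow> ('b \<Rightarrow> real) \<Rightarrow> 'a \<Rightarrow> real" where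
  "norm_cap B G v c p i = (if i \<in> zero_buyers B G v p then c i
                           else c i / real_of_ereal (mbb_ratio G v p i))"

definition ba_val :: "('a \<Rightarrow> 'b \<Rightarrow> real) \<Rightarrow> ('a \<Rightarrow> real) \<Rightarrow> 'a \<Rightarrow> 'b set \<Rightarrow> real" where
  "ba_val v c i S = min (c i) (\<Sum>j\<in>S. v i j)"

definition integral_allocation :: "'a set \<Rightarrow> 'b set \<Rightarrow> ('a \<Rightarrow> 'b set) \<Rightarrow> bool" where
  "integral_allocation B G S \<longleftrightarrow>
     (\<forall>i\<in>B. S i \<subseteq> G) \<and> (\<forall>i\<in>B. \<forall>k\<in>B. i \<noteq> k \<longrightarrow> S i \<inter> S k = {}) \<and> (\<Union>i\<in>B. S i) = G"

end

theory Submission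
  imports Defs
begin

text \<open>Normalising by the MBB ratio makes every normalised value at most the price of the item,
  and turns the normalised cap of a capped buyer outside B_0 into her spending. With
  P_i = \<Prod>_{j\<in>S_i} max(p_j,1) and E_i = \<Sum>_{j\<in>S_i} min(p_j,1) one gets
  v'_i(S_i) \<le> P_i K_i exp(E_i - w_i), where K_i = c'_i for capped and K_i = 1 for uncapped
  buyers and w_i bounds the spending of i (using min(c, PE) \<le> P c exp(E - c) and E \<le> exp(E - 1)).
  In equilibrium every good j earns at least min(p_j,1), so \<Sum>_i E_i \<le> total spending \<le> \<Sum>_i w_i
  and the exponential factors multiply to at most 1.\<close>

lemma bb_ratio_le_mbb_ratio:
  "finite G \<Longrightarrow> j \<in> G \<Longrightarrow> bb_ratio (u i j) (p j) \<le> mbb_ratio G u p i"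
  unfolding mbb_ratio_def by (rule Max_ge) auto

lemma mbb_ratio_realE:
  assumes "finite G" "G \<noteq> {}" "\<forall>j\<in>G. p j \<ge> 0" "\<forall>j\<in>G. v i j \<ge> 0"
    and "i \<in> B" "i \<notin> zero_buyers B G v p"
  obtains \<alpha> where "\<alpha> \<ge> 0" "mbb_ratio G v p i = ereal \<alpha>" "\<And>j. j \<in> G \<Longrightarrow> v i j \<le> \<alpha> * p j"
proof -
  have no_free_value: "v i j = 0" if "j \<in> G" "p j = 0" for j
    using assms(4-6) that by (force simp: zero_buyers_def zero_goods_def)
  have "mbb_ratio G v p i \<in> (\<lambda>j. bb_ratio (v i j) (p j)) ` G"
    unfolding mbb_ratio_def using assms(1,2) by (intro Max_in) auto
  then obtain j0 where j0: "j0 \<in> G" "mbb_ratio G v p i = bb_ratio (v i j0) (p j0)" by blast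
  define \<alpha> where "\<alpha> = (if p j0 = 0 then 0 else v i j0 / p j0)"
  have \<alpha>: "\<alpha> \<ge> 0" "mbb_ratio G v p i = ereal \<alpha>"
    using j0 no_free_value assms(3,4) by (auto simp: \<alpha>_def bb_ratio_def zero_ereal_def)
  have "v i j \<le> \<alpha> * p j" if j: "j \<in> G" for j
  proof (cases "p j = 0")
    case True
    then show ?thesis using no_free_value j by simp
  next
    case False
    then have "p j > 0" using assms(3) j by force
    moreover have "ereal (v i j / p j) \<le> ereal \<alpha>"
      using bb_ratio_le_mbb_ratio[OF assms(1) j, of v i p] \<alpha> False by (simp add: bb_ratio_def)
    ultimately show ?thesis by (simp add: divide_le_eq)
  qed
  with \<alpha> that show ?thesis by blast
qed

lemma mbb_good_value_eq:
  assumes "mbb_ratio G v p i = ereal \<alpha>" "is_mbb G v p i j" "v i j \<ge> 0"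
  shows "v i j = \<alpha> * p j"
  using assms
  by (cases "p j = 0") (auto simp: is_mbb_def bb_ratio_def zero_ereal_def field_simps split: if_splits)

lemma thrifty_value_eq:
  assumes "mbb_ratio G v p i = ereal \<alpha>" "thrifty G v p i y"
    and "\<forall>j\<in>G. y j \<ge> 0" "\<forall>j\<in>G. v i j \<ge> 0"
  shows "(\<Sum>j\<in>G. v i j * y j) = \<alpha> * (\<Sum>j\<in>G. p j * y j)"
proof -
  have "v i j * y j = \<alpha> * (p j * y j)" if "j \<in> G" for j
    using that assms mbb_good_value_eq[OF assms(1)]
    by (cases "y j > 0") (auto simp: thrifty_def intro: antisym)
  then show ?thesis unfolding sum_distrib_left by (rule sum.cong[OF refl])
qed

lemma norm_val_le_price:
  assumes "finite G" "G \<noteq> {}" "\<forall>j\<in>G. p j \<ge> 0" "\<forall>j\<in>G. v i j \<ge> 0"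
    and "i \<in> B" "i \<notin> zero_buyers B G v p" "j \<in> G"
  shows "0 \<le> norm_val B G v p i j" "norm_val B G v p i j \<le> p j"
proof -
  obtain \<alpha> where \<alpha>: "\<alpha> \<ge> 0" "mbb_ratio G v p i = ereal \<alpha>" "v i j \<le> \<alpha> * p j"
    using mbb_ratio_realE[OF assms(1-6)] assms(7) by metis
  have nv: "norm_val B G v p i j = v i j / \<alpha>" using \<alpha>(2) assms(6) by (simp add: norm_val_def)
  show "0 \<le> norm_val B G v p i j" using nv \<alpha>(1) assms(4,7) by simp
  show "norm_val B G v p i j \<le> p j"
    using nv \<alpha> assms(3,7) by (cases "\<alpha> = 0") (auto simp: divide_le_eq mult.commute)
qed

text \<open>A buyer who values a free good can reach her cap at no cost, so every demand bundle caps her.\<close>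
lemma zero_buyer_demand_capped:
  assumes "finite G" "i \<in> zero_buyers B G v p" "demand_bundle G v c m p i y"
    and "c i > 0" "\<forall>j\<in>G. v i j \<ge> 0"
  shows "bundle_util G v c i y = c i"
proof -
  obtain j0 where j0: "j0 \<in> G" "p j0 = 0" "v i j0 > 0"
    using assms(2) by (auto simp: zero_buyers_def zero_goods_def)
  have aff: "affordable G m p i y"
    and opt: "\<And>z. affordable G m p i z \<Longrightarrow> bundle_util G v c i z \<le> bundle_util G v c i y"
    using assms(3) by (auto simp: demand_bundle_def)
  define z where "z = y(j0 := y j0 + c i / v i j0)"
  have y_nonneg: "\<forall>j\<in>G. y j \<ge> 0" using aff by (simp add: affordable_def)
  have "(\<Sum>j\<in>G. p j * z j) = (\<Sum>j\<in>G. p j * y j)"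
    using assms(1) j0 by (simp add: z_def sum.remove algebra_simps)
  then have "affordable G m p i z"
    using aff y_nonneg j0 assms(4) by (auto simp: affordable_def z_def)
  moreover have "(\<Sum>j\<in>G. v i j * z j) = (\<Sum>j\<in>G. v i j * y j) + c i"
    using assms(1) j0 by (simp add: z_def sum.remove algebra_simps)
  moreover have "(\<Sum>j\<in>G. v i j * y j) \<ge> 0"
    using y_nonneg assms(5) by (intro sum_nonneg) auto
  ultimately have "c i \<le> bundle_util G v c i y"
    using opt[of z] by (simp add: bundle_util_def)
  then show ?thesis by (simp add: bundle_util_def)
qed

lemma zero_buyer_thrifty_spending:
  assumes "finite G" "i \<in> zero_buyers B G v p" "\<forall>j\<in>G. y j \<ge> 0" "thrifty G v p i y"
  shows "(\<Sum>j\<in>G. p j * y j) = 0"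
proof -
  obtain j0 where j0: "j0 \<in> G" "p j0 = 0" "v i j0 > 0"
    using assms(2) by (auto simp: zero_buyers_def zero_goods_def)
  have "mbb_ratio G v p i = \<infinity>"
    using bb_ratio_le_mbb_ratio[OF assms(1) j0(1), of v i p] j0 by (simp add: bb_ratio_def)
  then have "p j = 0" if "j \<in> G" "y j > 0" for j
    using assms(4) that by (auto simp: thrifty_def is_mbb_def bb_ratio_def split: if_splits)
  then show ?thesis
    using assms(3) by (intro sum.neutral) (metis less_eq_real_def mult_eq_0_iff)
qed

lemma capped_thrifty_spending_eq_norm_cap:
  assumes "finite G" "G \<noteq> {}" "\<forall>j\<in>G. p j \<ge> 0" "\<forall>j\<in>G. v i j \<ge> 0"
    and "i \<in> B" "i \<notin> zero_buyers B G v p" "c i > 0"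
    and "\<forall>j\<in>G. y j \<ge> 0" "thrifty G v p i y" "modest G v c i y" "bundle_util G v c i y = c i"
  shows "norm_cap B G v c p i = (\<Sum>j\<in>G. p j * y j)"
proof -
  obtain \<alpha> where \<alpha>: "\<alpha> \<ge> 0" "mbb_ratio G v p i = ereal \<alpha>"
    using mbb_ratio_realE[OF assms(1-6)] by metis
  have "(\<Sum>j\<in>G. v i j * y j) = c i"
    using assms(10,11) by (auto simp: bundle_util_def modest_def min_def split: if_splits)
  then have "\<alpha> * (\<Sum>j\<in>G. p j * y j) = c i"
    using thrifty_value_eq[OF \<alpha>(2) assms(9,8,4)] by simp
  moreover have "norm_cap B G v c p i = c i / \<alpha>"
    using \<alpha>(2) assms(6) by (simp add: norm_cap_def)
  moreover from calculation have "\<alpha> \<noteq> 0" using assms(7) by auto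
  ultimately show ?thesis by (metis nonzero_mult_div_cancel_left)
qed

lemma sum_le_prod_max_one_mult_sum_min_one:
  fixes p :: "'b \<Rightarrow> real"
  assumes "finite S" "\<forall>j\<in>S. p j \<ge> 0"
  shows "(\<Sum>j\<in>S. p j) \<le> (\<Prod>j\<in>S. max (p j) 1) * (\<Sum>j\<in>S. min (p j) 1)"
proof -
  let ?P = "\<Prod>j\<in>S. max (p j) 1"
  have "p j \<le> ?P * min (p j) 1" if j: "j \<in> S" for j
  proof (cases "p j \<le> 1")
    case True
    have "1 \<le> ?P" by (intro prod_ge_1) auto
    then show ?thesis using True assms(2) j mult_right_mono[of 1 ?P "p j"] by simp
  next
    case False
    have "(\<Prod>k\<in>{j}. max (p k) 1) \<le> ?P" using j by (intro prod_mono2[OF assms(1)]) auto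
    then show ?thesis using False by simp
  qed
  then show ?thesis unfolding sum_distrib_left by (rule sum_mono)
qed

lemma prod_max_one_eq:
  fixes f :: "'b \<Rightarrow> real"
  assumes "finite G"
  shows "(\<Prod>j\<in>G. max (f j) 1) = (\<Prod>j\<in>{j\<in>G. f j > 1}. f j)"
  unfolding prod.inter_filter[OF assms] by (rule prod.cong) auto

lemma min_le_mult_exp:
  fixes c P E :: real
  assumes "0 \<le> c" "c \<le> 1" "1 \<le> P" "0 \<le> E"
  shows "min c (P * E) \<le> P * c * exp (E - c)"
proof (cases "c \<le> E")
  case True
  then have "1 \<le> P * exp (E - c)"
    using assms(3) mult_mono[of 1 P 1 "exp (E - c)"] by simp
  then have "c * 1 \<le> c * (P * exp (E - c))"
    using assms(1) by (rule mult_left_mono)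
  then show ?thesis by (simp add: ac_simps)
next
  case False
  have "E \<le> c * (1 + (E - c))"
    using mult_nonneg_nonneg[of "1 - c" "c - E"] assms False by (simp add: algebra_simps)
  also have "\<dots> \<le> c * exp (E - c)"
    by (rule mult_left_mono[OF exp_ge_add_one_self assms(1)])
  finally have "P * E \<le> P * (c * exp (E - c))"
    using assms(3) by (intro mult_left_mono) auto
  then show ?thesis by (simp add: mult.assoc)
qed

lemma min_one_le_earning:
  assumes "p j \<ge> 0" "p j * (modest_supply (\<lambda>_. 1) p j - X) = 0"
  shows "min (p j) 1 \<le> p j * X"
proof (cases "p j = 0")
  case False
  then have "X = min 1 (1 / p j)" using assms by (simp add: modest_supply_def)
  then show ?thesis using False assms(1) by (auto simp: min_def field_simps)
qed simp

lemma tm_equilibrium_earnings_ge: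
  assumes "tm_equilibrium B G u c m (\<lambda>_. 1) x p"
  shows "(\<Sum>j\<in>G. min (p j) 1) \<le> (\<Sum>i\<in>B. \<Sum>j\<in>G. p j * x i j)"
proof -
  have "(\<Sum>j\<in>G. min (p j) 1) \<le> (\<Sum>j\<in>G. p j * (\<Sum>i\<in>B. x i j))"
    using assms by (intro sum_mono min_one_le_earning) (auto simp: tm_equilibrium_def)
  then show ?thesis by (simp add: sum_distrib_left sum.swap[of _ G])
qed

lemma integral_allocation_sum:
  assumes "integral_allocation B G S" "finite B" "finite G"
  shows "(\<Sum>i\<in>B. \<Sum>j\<in>S i. f j) = (\<Sum>j\<in>G. f j)"
proof -
  have "finite (S i)" if "i \<in> B" for i
    using assms that finite_subset by (auto simp: integral_allocation_def)
  then show ?thesis using assms(1,2)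
    by (subst sum.UNION_disjoint[symmetric]) (auto simp: integral_allocation_def)
qed

lemma integral_allocation_prod:
  assumes "integral_allocation B G S" "finite B" "finite G"
  shows "(\<Prod>i\<in>B. \<Prod>j\<in>S i. f j) = (\<Prod>j\<in>G. f j)"
proof -
  have "finite (S i)" if "i \<in> B" for i
    using assms that finite_subset by (auto simp: integral_allocation_def)
  then show ?thesis using assms(1,2)
    by (subst prod.UNION_disjoint[symmetric]) (auto simp: integral_allocation_def)
qed

lemma prod_le_prod_exp_slack:
  fixes t Q e :: "'a \<Rightarrow> real"
  assumes "finite B" "\<And>i. i \<in> B \<Longrightarrow> 0 \<le> t i" "\<And>i. i \<in> B \<Longrightarrow> t i \<le> Q i * exp (e i)"
    and "(\<Sum>i\<in>B. e i) \<le> 0"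
  shows "(\<Prod>i\<in>B. t i) \<le> (\<Prod>i\<in>B. Q i)"
proof -
  have Q_nonneg: "0 \<le> Q i" if "i \<in> B" for i
    using assms(2,3)[OF that] by (metis exp_gt_zero not_le order_trans zero_le_mult_iff)
  have "(\<Prod>i\<in>B. t i) \<le> (\<Prod>i\<in>B. Q i * exp (e i))"
    using assms(2,3) by (intro prod_mono) auto
  also have "\<dots> = (\<Prod>i\<in>B. Q i) * exp (\<Sum>i\<in>B. e i)"
    by (simp add: prod.distrib exp_sum[OF assms(1)])
  also have "\<dots> \<le> (\<Prod>i\<in>B. Q i)"
    using assms(4) Q_nonneg by (intro mult_left_le) (auto intro: prod_nonneg)
  finally show ?thesis .
qed

lemma norm_val_sum_le:
  assumes "finite G" "G \<noteq> {}" "\<forall>j\<in>G. p j \<ge> 0" "\<forall>j\<in>G. v i j \<ge> 0"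
    and "i \<in> B" "i \<notin> zero_buyers B G v p" "S \<subseteq> G"
  shows "(\<Sum>j\<in>S. norm_val B G v p i j) \<le> (\<Prod>j\<in>S. max (p j) 1) * (\<Sum>j\<in>S. min (p j) 1)"
proof -
  have "finite S" using assms(1,7) finite_subset by blast
  have "(\<Sum>j\<in>S. norm_val B G v p i j) \<le> (\<Sum>j\<in>S. p j)"
    using assms norm_val_le_price(2)[OF assms(1-6)] by (intro sum_mono) auto
  also have "\<dots> \<le> (\<Prod>j\<in>S. max (p j) 1) * (\<Sum>j\<in>S. min (p j) 1)"
    using assms(3,7) by (intro sum_le_prod_max_one_mult_sum_min_one[OF \<open>finite S\<close>]) auto
  finally show ?thesis .
qed

text \<open>The witness w is the budget 1 for an uncapped buyer, her spending c'_i for a capped buyer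
  outside B_0, and 0 for a buyer in B_0, whose normalised cap is her original cap.\<close>
lemma demand_bundle_value_bound:
  assumes "finite G" "G \<noteq> {}" "\<forall>j\<in>G. p j \<ge> 0" "\<forall>j\<in>G. v i j \<ge> 0"
    and "i \<in> B" "c i > 0" "S \<subseteq> G"
    and "demand_bundle G v c (\<lambda>_. 1) p i y" "thrifty G v p i y" "modest G v c i y"
  defines "P \<equiv> \<Prod>j\<in>S. max (p j) 1" and "E \<equiv> \<Sum>j\<in>S. min (p j) 1"
    and "K \<equiv> if bundle_util G v c i y = c i then norm_cap B G v c p i else 1"
    and "t \<equiv> ba_val (norm_val B G v p) (norm_cap B G v c p) i S"
  obtains w where "(\<Sum>j\<in>G. p j * y j) \<le> w" "0 \<le> t" "t \<le> P * K * exp (E - w)"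
proof -
  have y_nonneg: "\<forall>j\<in>G. y j \<ge> 0" and spend_le_1: "(\<Sum>j\<in>G. p j * y j) \<le> 1"
    using assms(8) by (auto simp: demand_bundle_def affordable_def)
  have P_ge_1: "1 \<le> P" unfolding P_def by (intro prod_ge_1) auto
  have E_nonneg: "0 \<le> E" unfolding E_def using assms(3,7) by (intro sum_nonneg) auto
  show thesis
  proof (cases "i \<in> zero_buyers B G v p")
    case True
    have K: "K = c i" and t: "t = min (c i) (\<Sum>j\<in>S. v i j)"
      using zero_buyer_demand_capped[OF assms(1) True assms(8,6,4)] True
      by (simp_all add: K_def t_def ba_val_def norm_val_def norm_cap_def)
    have "0 \<le> (\<Sum>j\<in>S. v i j)" using assms(4,7) by (intro sum_nonneg) auto
    then have "0 \<le> t" using t assms(6) by simp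
    have "1 \<le> P * exp E" using P_ge_1 E_nonneg mult_mono[of 1 P 1 "exp E"] by simp
    then have "c i * 1 \<le> c i * (P * exp E)" using assms(6) by (intro mult_left_mono) auto
    then have "t \<le> P * K * exp (E - 0)" using t K by (simp add: ac_simps)
    with \<open>0 \<le> t\<close> show thesis
      using that[of 0] zero_buyer_thrifty_spending[OF assms(1) True y_nonneg assms(9)] by simp
  next
    case False
    obtain \<alpha> where "\<alpha> \<ge> 0" "mbb_ratio G v p i = ereal \<alpha>"
      using mbb_ratio_realE[OF assms(1-5) False] by metis
    then have "0 \<le> norm_cap B G v c p i" using False assms(6) by (simp add: norm_cap_def)
    moreover have "0 \<le> (\<Sum>j\<in>S. norm_val B G v p i j)"
      using norm_val_le_price(1)[OF assms(1-5) False] assms(7) by (intro sum_nonneg) auto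
    moreover have "(\<Sum>j\<in>S. norm_val B G v p i j) \<le> P * E"
      unfolding P_def E_def using norm_val_sum_le[OF assms(1-5) False assms(7)] .
    ultimately have t: "0 \<le> t" "t \<le> min (norm_cap B G v c p i) (P * E)"
      by (auto simp: t_def ba_val_def)
    show thesis
    proof (cases "bundle_util G v c i y = c i")
      case True
      have "norm_cap B G v c p i = (\<Sum>j\<in>G. p j * y j)"
        using capped_thrifty_spending_eq_norm_cap[OF assms(1-5) False assms(6) y_nonneg assms(9,10) True] .
      then show thesis
        using that[of "norm_cap B G v c p i"] t True spend_le_1 P_ge_1 E_nonneg
          min_le_mult_exp[of "norm_cap B G v c p i" P E] \<open>0 \<le> norm_cap B G v c p i\<close>
        by (auto simp: K_def)
    next
      case False
      have "P * E \<le> P * exp (E - 1)"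
        using exp_ge_add_one_self[of "E - 1"] P_ge_1 by (intro mult_left_mono) auto
      then show thesis using that[of 1] t False spend_le_1 by (auto simp: K_def)
    qed
  qed
qed

lemma tm_equilibrium_value_bound:
  assumes "finite G" "card B \<le> card G" "finite B"
    and "\<forall>i\<in>B. \<forall>j\<in>G. v i j \<ge> 0" "\<forall>i\<in>B. c i > 0"
    and "tm_equilibrium B G v c (\<lambda>_. 1) (\<lambda>_. 1) x p" "integral_allocation B G S"
  shows "\<forall>i\<in>B. \<exists>w. (\<Sum>j\<in>G. p j * x i j) \<le> w
    \<and> 0 \<le> ba_val (norm_val B G v p) (norm_cap B G v c p) i (S i)
    \<and> ba_val (norm_val B G v p) (norm_cap B G v c p) i (S i)
      \<le> (\<Prod>j\<in>S i. max (p j) 1)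
        * (if i \<in> capped_buyers B G v c x then norm_cap B G v c p i else 1)
        * exp ((\<Sum>j\<in>S i. min (p j) 1) - w)"
    (is "\<forall>i\<in>B. ?bound i")
proof
  fix i assume i: "i \<in> B"
  have G_ne: "G \<noteq> {}" using assms(2,3) i by (auto simp: card_gt_0_iff[symmetric])
  have S_sub: "S i \<subseteq> G" using assms(7) i by (simp add: integral_allocation_def)
  have v_nonneg: "\<forall>j\<in>G. v i j \<ge> 0" and c_pos: "c i > 0" using assms(4,5) i by auto
  have eq: "demand_bundle G v c (\<lambda>_. 1) p i (x i)" "thrifty G v p i (x i)"
    "modest G v c i (x i)" "\<forall>j\<in>G. p j \<ge> 0"
    using assms(6) i by (simp_all add: tm_equilibrium_def)
  obtain w where "(\<Sum>j\<in>G. p j * x i j) \<le> w"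
    "0 \<le> ba_val (norm_val B G v p) (norm_cap B G v c p) i (S i)"
    "ba_val (norm_val B G v p) (norm_cap B G v c p) i (S i)
     \<le> (\<Prod>j\<in>S i. max (p j) 1)
       * (if bundle_util G v c i (x i) = c i then norm_cap B G v c p i else 1)
       * exp ((\<Sum>j\<in>S i. min (p j) 1) - w)"
    by (rule demand_bundle_value_bound[OF assms(1) G_ne eq(4) v_nonneg i c_pos S_sub eq(1-3)])
  then show "?bound i" using i by (auto simp: capped_buyers_def)
qed

theorem mainTheorem3:
  fixes B :: "'a set" and G :: "'b set"
    and v :: "'a \<Rightarrow> 'b \<Rightarrow> real" and c :: "'a \<Rightarrow> real"
    and x :: "'a \<Rightarrow> 'b \<Rightarrow> real" and p :: "'b \<Rightarrow> real"
    and S :: "'a \<Rightarrow> 'b set"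
  assumes "finite B" and "finite G" and "card G \<ge> card B"
    and "\<forall>i\<in>B. \<forall>j\<in>G. v i j \<ge> 0"
    and "\<forall>i\<in>B. c i > 0"
    and "\<forall>i\<in>B. \<forall>j\<in>G. v i j \<le> c i"
    and "money_clearing B G v (\<lambda>_. 1) (\<lambda>_. 1)"
    and "tm_equilibrium B G v c (\<lambda>_. 1) (\<lambda>_. 1) x p"
    and "integral_allocation B G S"
  shows "(\<Prod>i\<in>B. ba_val (norm_val B G v p) (norm_cap B G v c p) i (S i)) powr (1 / real (card B))
    \<le> ((\<Prod>i\<in>capped_buyers B G v c x. norm_cap B G v c p i) * (\<Prod>j\<in>{j\<in>G. p j > 1}. p j))
        powr (1 / real (card B))"
proof -
  define t where "t i = ba_val (norm_val B G v p) (norm_cap B G v c p) i (S i)" for i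
  define K where "K i = (if i \<in> capped_buyers B G v c x then norm_cap B G v c p i else 1)" for i
  obtain w where w: "\<forall>i\<in>B. (\<Sum>j\<in>G. p j * x i j) \<le> w i \<and> 0 \<le> t i
      \<and> t i \<le> (\<Prod>j\<in>S i. max (p j) 1) * K i * exp ((\<Sum>j\<in>S i. min (p j) 1) - w i)"
    using bchoice[OF tm_equilibrium_value_bound[OF assms(2,3,1,4,5,8,9)]]
    unfolding t_def K_def by blast
  have "(\<Sum>i\<in>B. \<Sum>j\<in>S i. min (p j) 1) = (\<Sum>j\<in>G. min (p j) 1)"
    by (rule integral_allocation_sum[OF assms(9,1,2)])
  also have "\<dots> \<le> (\<Sum>i\<in>B. \<Sum>j\<in>G. p j * x i j)"
    by (rule tm_equilibrium_earnings_ge[OF assms(8)])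
  also have "\<dots> \<le> (\<Sum>i\<in>B. w i)"
    using w by (intro sum_mono) auto
  finally have "(\<Prod>i\<in>B. t i) \<le> (\<Prod>i\<in>B. (\<Prod>j\<in>S i. max (p j) 1) * K i)"
    using w by (intro prod_le_prod_exp_slack[OF assms(1)]) (auto simp: sum_subtractf)
  also have "\<dots> = (\<Prod>j\<in>G. max (p j) 1) * (\<Prod>i\<in>B. K i)"
    by (simp add: prod.distrib integral_allocation_prod[OF assms(9,1,2)])
  also have "\<dots> = (\<Prod>i\<in>capped_buyers B G v c x. norm_cap B G v c p i) * (\<Prod>j\<in>{j\<in>G. p j > 1}. p j)"
    using prod.inter_filter[OF assms(1), of "norm_cap B G v c p" "\<lambda>i. i \<in> capped_buyers B G v c x"]
    by (simp add: prod_max_one_eq[OF assms(2)] K_def capped_buyers_def)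
  finally have "(\<Prod>i\<in>B. t i) \<le> (\<Prod>i\<in>capped_buyers B G v c x. norm_cap B G v c p i) *
      (\<Prod>j\<in>{j\<in>G. p j > 1}. p j)" .
  moreover have "0 \<le> (\<Prod>i\<in>B. t i)" using w by (intro prod_nonneg) auto
  ultimately show ?thesis unfolding t_def by (intro powr_mono2) auto
qed

end
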